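(* Let $m\ge 2$. If the Lucas numbers are complete mod $m$, then every Gibonacci sequence $\{G_n(a,b)\}$ (with $\gcd(a,b)=1$) is complete mod $m$.
   Context: For integers $a,b$ with $\gcd(a,b)=1$, the Gibonacci sequence $\{G_n(a,b)\}_{n\ge1}$ is defined by $G_1=a$, $G_2=b$, $G_{n+1}=G_{n-1}+G_n$. The Lucas numbers are $L_n=G_n(1,3)$. A sequence is complete mod $m$ if every residue class modulo $m$ contains some term of the sequence. *)

theory Defs
  imports "HOL-Number_Theory.Number_Theory"
begin

text \<open>Index 0 is an auxiliary value (b - a) making the recurrence uniform; it is never used
  in the notion of completeness below, which only refers to indices n >= 1.\<close>
fun gib :: "int \<Rightarrow> int \<Rightarrow> nat \<Rightarrow> int" where
  "gib a b 0 = b - a"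
| "gib a b (Suc 0) = a"
| "gib a b (Suc (Suc n)) = gib a b n + gib a b (Suc n)"

definition lucas :: "nat \<Rightarrow> int" where
  "lucas n = gib 1 3 n"

definition complete_mod :: "(nat \<Rightarrow> int) \<Rightarrow> int \<Rightarrow> bool" where
  "complete_mod f m \<longleftrightarrow> (\<forall>r::int. \<exists>n\<ge>1. [f n = r] (mod m))"

end

theory Submission
  imports Defs
begin

text \<open>If every coprime pair \<open>(a, b)\<close> is congruent modulo \<open>m\<close> to \<open>c (L\<^sub>k\<^sub>+\<^sub>1, L\<^sub>k\<^sub>+\<^sub>2)\<close> for a
  unit \<open>c\<close>, then \<open>G\<^sub>n(a, b) \<equiv> c L\<^sub>n\<^sub>+\<^sub>k\<close>, and completeness passes from the Lucas numbers
  (which are purely periodic modulo \<open>m\<close>) to \<open>G(a, b)\<close>. This covering property is verified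
  for every \<open>m\<close> modulo which the Lucas numbers are complete, by classifying these \<open>m\<close>.
  No prime \<open>p \<ge> 11\<close> divides \<open>m\<close>: if \<open>5\<close> is a square modulo \<open>p\<close>, the Lucas numbers have
  period dividing \<open>p - 1\<close>; otherwise \<open>(2L\<^sub>n\<^sub>+\<^sub>1 - L\<^sub>n)\<^sup>2 = 5 (L\<^sub>n\<^sup>2 - 4(-1)\<^sup>n)\<close> shows
  that \<open>L\<^sub>n\<close> avoids every \<open>x\<close> with \<open>x\<^sup>2 - 4\<close> and \<open>x\<^sup>2 + 4\<close> nonzero squares, and such an \<open>x\<close>
  exists (\<open>x = 0\<close> if \<open>p \<equiv> 1 (mod 4)\<close>, otherwise a character-sum count produces three
  consecutive quadratic residues). Evaluating finitely many cases (\<open>5, 8, 12, 18, 21, 28, 49\<close>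
  are incomplete) leaves \<open>m \<in> {2, 4, 6, 7, 14}\<close>, checked directly, and \<open>m = 3\<^sup>k\<close>, handled by
  Hensel-type lifting from \<open>m = 3\<close>.\<close>

section \<open>Fibonacci-type sequences\<close>

definition fib_rec :: "(nat \<Rightarrow> int) \<Rightarrow> bool" where
  "fib_rec u \<longleftrightarrow> (\<forall>n. u (Suc (Suc n)) = u n + u (Suc n))"

lemma fib_recD: "fib_rec u \<Longrightarrow> u (Suc (Suc n)) = u n + u (Suc n)"
  by (simp add: fib_rec_def)

lemma fib_rec_gib: "fib_rec (gib a b)"
  by (simp add: fib_rec_def)

lemma fib_rec_lucas: "fib_rec lucas"
  by (simp add: fib_rec_def lucas_def)

lemma fib_rec_shift: "fib_rec u \<Longrightarrow> fib_rec (\<lambda>n. u (n + k))"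
  by (simp add: fib_rec_def)

lemma fib_rec_lincomb: "fib_rec u \<Longrightarrow> fib_rec v \<Longrightarrow> fib_rec (\<lambda>n. a * u n + b * v n)"
  by (simp add: fib_rec_def algebra_simps)

lemma fib_rec_scale: "fib_rec u \<Longrightarrow> fib_rec (\<lambda>n. a * u n)"
  using fib_rec_lincomb[of u u a 0] by simp

lemma lucas_0 [simp]: "lucas 0 = 2"
  and lucas_1 [simp]: "lucas (Suc 0) = 1"
  and lucas_2 [simp]: "lucas (Suc (Suc 0)) = 3"
  by (simp_all add: lucas_def)

text \<open>The recurrence can be run backwards as well as forwards.\<close>
lemma cong_from_two_terms_mod:
  fixes u v :: "nat \<Rightarrow> int"
  assumes u: "\<And>n. [u (Suc (Suc n)) = u n + u (Suc n)] (mod m)"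
    and v: "\<And>n. [v (Suc (Suc n)) = v n + v (Suc n)] (mod m)"
    and "[u i = v i] (mod m)" "[u (Suc i) = v (Suc i)] (mod m)"
  shows "[u n = v n] (mod m)"
proof -
  define agree where "agree j \<longleftrightarrow> [u j = v j] (mod m) \<and> [u (Suc j) = v (Suc j)] (mod m)" for j
  have sums: "[u j + u (Suc j) = v j + v (Suc j)] (mod m) \<longleftrightarrow> [u (Suc (Suc j)) = v (Suc (Suc j))] (mod m)"
    for j using u[of j] v[of j] by (meson cong_sym cong_trans)
  have up: "agree j \<Longrightarrow> agree (Suc j)" for j
    unfolding agree_def using sums[of j] cong_add by blast
  have down: "agree (Suc j) \<Longrightarrow> agree j" for j
  proof -
    assume "agree (Suc j)"
    then have "[u (Suc (Suc j)) - u (Suc j) = v (Suc (Suc j)) - v (Suc j)] (mod m)"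
      and "[u (Suc j) = v (Suc j)] (mod m)"
      using sums[of j] cong_diff unfolding agree_def by blast+
    moreover have "[u (Suc (Suc j)) - u (Suc j) = u j] (mod m)" "[v (Suc (Suc j)) - v (Suc j) = v j] (mod m)"
      using cong_diff[OF u[of j] cong_refl[of "u (Suc j)"]] cong_diff[OF v[of j] cong_refl[of "v (Suc j)"]]
      by simp_all
    ultimately show "agree j"
      unfolding agree_def by (meson cong_sym cong_trans)
  qed
  have "agree i" using assms(3,4) by (simp add: agree_def)
  then have "agree n"
  proof (cases "i \<le> n")
    case True
    then show ?thesis using \<open>agree i\<close> by (induction n rule: dec_induct) (auto intro: up)
  next
    case False
    then have "n \<le> i" by simp
    then show ?thesis using \<open>agree i\<close> by (induction n rule: inc_induct) (auto intro: down)
  qed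
  then show ?thesis by (simp add: agree_def)
qed

lemma fib_rec_cong_from_two_terms:
  assumes "fib_rec u" "fib_rec v" "[u i = v i] (mod m)" "[u (Suc i) = v (Suc i)] (mod m)"
  shows "[u n = v n] (mod m)"
  using cong_from_two_terms_mod[of u m v i] assms by (simp add: fib_recD)

lemma periodic_mod_mult:
  fixes u :: "nat \<Rightarrow> int" and t :: nat
  assumes "\<And>n. [u (n + N) = u n] (mod m)"
  shows "[u (n + t * N) = u n] (mod m)"
proof (induction t)
  case (Suc t)
  have "[u (n + Suc t * N) = u (n + t * N)] (mod m)"
    using assms[of "n + t * N"] by (simp add: add_ac)
  then show ?case using Suc.IH by (rule cong_trans)
qed simp

lemma periodic_mod_reduce:
  fixes u :: "nat \<Rightarrow> int"
  assumes "N > 0" "\<And>n. [u (n + N) = u n] (mod m)" "n \<ge> 1"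
  obtains s where "s < N" "[u n = u (Suc s)] (mod m)"
proof
  show "(n - 1) mod N < N" using assms(1) by simp
  have "n = Suc ((n - 1) mod N) + (n - 1) div N * N" using assms(3) by simp
  then show "[u n = u (Suc ((n - 1) mod N))] (mod m)"
    using periodic_mod_mult[where u = u, OF assms(2)] by metis
qed

lemma not_complete_mod_if_short_period:
  fixes u :: "nat \<Rightarrow> int"
  assumes "N > 0" "int N < m" "\<And>n. [u (n + N) = u n] (mod m)"
  shows "\<not> complete_mod u m"
proof
  assume complete: "complete_mod u m"
  have "{0..<m} \<subseteq> (\<lambda>s. u (Suc s) mod m) ` {..<N}"
  proof
    fix r assume r: "r \<in> {0..<m}"
    obtain n where "n \<ge> 1" "[u n = r] (mod m)"
      using complete unfolding complete_mod_def by blast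
    moreover obtain s where "s < N" "[u n = u (Suc s)] (mod m)"
      using periodic_mod_reduce[where u = u, OF assms(1,3) \<open>n \<ge> 1\<close>] by blast
    ultimately have "u (Suc s) mod m = r"
      using r by (metis atLeastLessThan_iff cong_def mod_pos_pos_trivial)
    then show "r \<in> (\<lambda>s. u (Suc s) mod m) ` {..<N}" using \<open>s < N\<close> by blast
  qed
  then have "card {0..<m} \<le> card {..<N}"
    by (meson card_image_le card_mono finite_imageI finite_lessThan order_trans)
  then show False using assms(2) by simp
qed

text \<open>Pigeonhole on the \<open>m\<^sup>2 + 1\<close> pairs of consecutive residues \<open>(u i, u (i + 1))\<close>, \<open>i \<le> m\<^sup>2\<close>.\<close>
lemma fib_rec_periodic_mod:
  assumes "fib_rec u" "(m::int) > 0"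
  obtains N where "N > 0" "\<And>n. [u (n + N) = u n] (mod m)"
proof -
  define pair where "pair i = (u i mod m, u (Suc i) mod m)" for i
  have "pair ` {0..nat (m * m)} \<subseteq> {0..<m} \<times> {0..<m}"
    using assms(2) by (auto simp: pair_def)
  moreover have "card ({0..<m} \<times> {0..<m}) < card {0..nat (m * m)}"
    using assms(2) by (simp add: card_cartesian_product nat_mult_distrib)
  ultimately have "\<not> inj_on pair {0..nat (m * m)}"
    using card_inj_on_le[of pair "{0..nat (m * m)}" "{0..<m} \<times> {0..<m}"] by fastforce
  then obtain i j where "i \<noteq> j" "pair i = pair j"
    unfolding inj_on_def by blast
  then obtain i j where "i < j" "pair i = pair j"
    by (metis linorder_neqE_nat)
  then have "[u i = u (i + (j - i))] (mod m)" "[u (Suc i) = u (Suc i + (j - i))] (mod m)"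
    by (simp_all add: pair_def cong_def)
  then have "[u n = u (n + (j - i))] (mod m)" for n
    by (rule fib_rec_cong_from_two_terms[OF assms(1) fib_rec_shift[OF assms(1)]])
  then show ?thesis
    using that[of "j - i"] \<open>i < j\<close> by (simp add: cong_sym)
qed

section \<open>From Lucas numbers to Gibonacci sequences\<close>

lemma complete_mod_dvd: "complete_mod u m \<Longrightarrow> d dvd m \<Longrightarrow> complete_mod u d"
  unfolding complete_mod_def by (meson cong_dvd_modulus)

lemma complete_mod_unit_times_shifted_lucas:
  assumes m: "m > 0" and lucas: "complete_mod lucas m" and c: "coprime c m"
    and u: "\<And>n. [u n = c * lucas (n + k)] (mod m)"
  shows "complete_mod u m"
  unfolding complete_mod_def
proof
  fix r
  obtain c' where c': "[c * c' = 1] (mod m)" using cong_solve_coprime_int[OF c] by blast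
  obtain j where j: "j \<ge> 1" "[lucas j = c' * r] (mod m)"
    using lucas unfolding complete_mod_def by blast
  obtain N where N: "N > 0" "\<And>n. [lucas (n + N) = lucas n] (mod m)"
    using fib_rec_periodic_mod[OF fib_rec_lucas m] by blast
  define n where "n = j + k * N - k"
  have "k \<le> k * N" using N(1) by simp
  then have n: "n \<ge> 1" "n + k = j + k * N" using j(1) unfolding n_def by linarith+
  have "[u n = c * lucas (j + k * N)] (mod m)" using u[of n] n(2) by simp
  also have "[c * lucas (j + k * N) = c * (c' * r)] (mod m)"
    using periodic_mod_mult[where u = lucas, OF N(2)] j(2) cong_scalar_left cong_trans by blast
  also have "c * (c' * r) = (c * c') * r" by (simp add: mult.assoc)
  also have "[(c * c') * r = 1 * r] (mod m)" using c' by (rule cong_scalar_right)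
  finally show "\<exists>n\<ge>1. [u n = r] (mod m)" using n(1) by auto
qed

definition lucas_pairs_cover :: "int \<Rightarrow> bool" where
  "lucas_pairs_cover m \<longleftrightarrow> (\<forall>x y. coprime x y \<longrightarrow> (\<exists>c k. coprime c m \<and>
     [x = c * lucas (Suc k)] (mod m) \<and> [y = c * lucas (Suc (Suc k))] (mod m)))"

lemma complete_mod_gib_if_lucas_pairs_cover:
  assumes "m > 0" "lucas_pairs_cover m" "complete_mod lucas m" "coprime a b"
  shows "complete_mod (gib a b) m"
proof -
  obtain c k where c: "coprime c m"
    and ab: "[a = c * lucas (Suc k)] (mod m)" "[b = c * lucas (Suc (Suc k))] (mod m)"
    using assms(2,4) unfolding lucas_pairs_cover_def by blast
  have shifted: "fib_rec (\<lambda>n. c * lucas (n + k))"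
    by (intro fib_rec_scale fib_rec_shift fib_rec_lucas)
  have "[gib a b n = c * lucas (n + k)] (mod m)" for n
    using fib_rec_cong_from_two_terms[OF fib_rec_gib shifted, where i = 1 and m = m] ab by simp
  then show ?thesis
    using complete_mod_unit_times_shifted_lucas[OF assms(1,3) c] by blast
qed

section \<open>Certificates checked by evaluation\<close>

fun fib_pairs_mod :: "int \<Rightarrow> nat \<Rightarrow> int \<Rightarrow> int \<Rightarrow> (int \<times> int) list" where
  "fib_pairs_mod m 0 x y = []"
| "fib_pairs_mod m (Suc K) x y = (x, y) # fib_pairs_mod m K y ((x + y) mod m)"

lemma length_fib_pairs_mod [simp]: "length (fib_pairs_mod m K x y) = K"
  by (induction K arbitrary: x y) auto

lemma nth_fib_pairs_mod:
  assumes "fib_rec u" "i < K"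
  shows "fib_pairs_mod m K (u j mod m) (u (Suc j) mod m) ! i = (u (j + i) mod m, u (Suc (j + i)) mod m)"
  using assms(2)
proof (induction K arbitrary: i j)
  case (Suc K)
  have "(u j mod m + u (Suc j) mod m) mod m = u (Suc (Suc j)) mod m"
    using fib_recD[OF assms(1), of j] by (simp add: mod_add_eq)
  then show ?case
    using Suc.IH[of "i - 1" "Suc j"] Suc.prems by (cases i) simp_all
qed simp

definition lucas_pairs_mod :: "int \<Rightarrow> nat \<Rightarrow> (int \<times> int) list" where
  "lucas_pairs_mod m K = fib_pairs_mod m K (1 mod m) (3 mod m)"

lemma nth_lucas_pairs_mod:
  "k < K \<Longrightarrow> lucas_pairs_mod m K ! k = (lucas (Suc k) mod m, lucas (Suc (Suc k)) mod m)"
  using nth_fib_pairs_mod[OF fib_rec_lucas, of k K m 1] by (simp add: lucas_pairs_mod_def)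

lemma length_lucas_pairs_mod [simp]: "length (lucas_pairs_mod m K) = K"
  by (simp add: lucas_pairs_mod_def)

lemma lucas_pairs_mod_eq_map:
  "lucas_pairs_mod m K = map (\<lambda>k. (lucas (Suc k) mod m, lucas (Suc (Suc k)) mod m)) [0..<K]"
  by (rule nth_equalityI) (simp_all add: nth_lucas_pairs_mod)

text \<open>Only residues \<open>0 \<le> x, y, c < m\<close> need to be checked; \<open>K\<close> is a period of the Lucas
  pairs modulo \<open>m\<close> (or a half-period when the second half is the negative of the first).\<close>
definition lucas_pairs_cover_check :: "int \<Rightarrow> nat \<Rightarrow> bool" where
  "lucas_pairs_cover_check m K \<longleftrightarrow> 0 < m \<and>
    (let R = map int [0..<nat m]; U = filter (\<lambda>c. gcd c m = 1) R; P = lucas_pairs_mod m K in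
     list_all (\<lambda>x. list_all (\<lambda>y. gcd (gcd x y) m = 1 \<longrightarrow>
       list_ex (\<lambda>c. (x, y) \<in> set (map (\<lambda>(a, b). (c * a mod m, c * b mod m)) P)) U) R) R)"

lemma lucas_pairs_cover_if_check:
  assumes "lucas_pairs_cover_check m K"
  shows "lucas_pairs_cover m"
  unfolding lucas_pairs_cover_def
proof (intro allI impI)
  fix x y :: int
  assume "coprime x y"
  have m: "0 < m" using assms by (simp add: lucas_pairs_cover_check_def)
  define R where "R = map int [0..<nat m]"
  have xy_R: "x mod m \<in> set R" "y mod m \<in> set R"
    using m by (simp_all add: R_def image_int_atLeastLessThan)
  have g: "gcd (gcd (x mod m) (y mod m)) m = 1"
  proof (rule coprime_imp_gcd_eq_1, rule coprimeI)
    fix d assume "d dvd gcd (x mod m) (y mod m)" "d dvd m"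
    then have "d dvd x" "d dvd y" by (metis dvd_mod_iff gcd_dvd1 gcd_dvd2 dvd_trans)+
    with \<open>coprime x y\<close> show "is_unit d" by (rule coprime_common_divisor)
  qed
  have cover: "\<forall>x\<in>set R. \<forall>y\<in>set R. gcd (gcd x y) m = 1 \<longrightarrow>
      (\<exists>c\<in>set (filter (\<lambda>c. gcd c m = 1) R).
        (x, y) \<in> set (map (\<lambda>(a, b). (c * a mod m, c * b mod m)) (lucas_pairs_mod m K)))"
    using assms unfolding lucas_pairs_cover_check_def Let_def list_all_iff list_ex_iff R_def
    by (elim conjE)
  obtain c where "c \<in> set (filter (\<lambda>c. gcd c m = 1) R)"
    and "(x mod m, y mod m) \<in> set (map (\<lambda>(a, b). (c * a mod m, c * b mod m)) (lucas_pairs_mod m K))"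
    using cover[rule_format, OF xy_R g] by blast
  then obtain k where c: "coprime c m" and "k < K"
    and xy: "(x mod m, y mod m) = (c * (lucas (Suc k) mod m) mod m, c * (lucas (Suc (Suc k)) mod m) mod m)"
    unfolding lucas_pairs_mod_eq_map by (auto simp: coprime_iff_gcd_eq_1)
  then have "[x = c * lucas (Suc k)] (mod m)" "[y = c * lucas (Suc (Suc k))] (mod m)"
    by (simp_all add: cong_def mod_mult_right_eq)
  then show "\<exists>c k. coprime c m \<and> [x = c * lucas (Suc k)] (mod m) \<and> [y = c * lucas (Suc (Suc k))] (mod m)"
    using c by blast
qed

definition lucas_misses_check :: "int \<Rightarrow> nat \<Rightarrow> int \<Rightarrow> bool" where
  "lucas_misses_check m K r \<longleftrightarrow> 0 < K \<and> lucas_pairs_mod m (Suc K) ! K = (1 mod m, 3 mod m) \<and>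
     list_all (\<lambda>(x, y). x \<noteq> r mod m) (lucas_pairs_mod m K)"

lemma not_complete_mod_lucas_if_misses_check:
  assumes "lucas_misses_check m K r"
  shows "\<not> complete_mod lucas m"
proof
  assume complete: "complete_mod lucas m"
  have K: "0 < K" and pair_K: "lucas_pairs_mod m (Suc K) ! K = (1 mod m, 3 mod m)"
    and misses: "list_all (\<lambda>(x, y). x \<noteq> r mod m) (lucas_pairs_mod m K)"
    using assms by (simp_all add: lucas_misses_check_def)
  have "[lucas (Suc K) = lucas 1] (mod m)" "[lucas (Suc (Suc K)) = lucas (Suc 1)] (mod m)"
    using pair_K nth_lucas_pairs_mod[of K "Suc K" m] by (simp_all add: cong_def)
  then have "[lucas (n + K) = lucas n] (mod m)" for n
    using fib_rec_cong_from_two_terms[OF fib_rec_shift[OF fib_rec_lucas, of K] fib_rec_lucas, of 1 m n]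
    by (simp add: add.commute)
  moreover obtain n where "n \<ge> 1" "[lucas n = r] (mod m)"
    using complete unfolding complete_mod_def by blast
  ultimately obtain s where "s < K" "[lucas (Suc s) = r] (mod m)"
    using periodic_mod_reduce[where u = lucas, OF K] by (metis cong_sym cong_trans)
  then show False
    using misses unfolding list_all_iff lucas_pairs_mod_eq_map by (auto simp: cong_def)
qed

section \<open>Primes at least 11\<close>

lemma fermat_theorem_int:
  fixes p a :: int
  assumes "prime p" "\<not> p dvd a"
  shows "[a ^ (nat p - 1) = 1] (mod p)"
proof -
  have "residues p" using prime_gt_1_int[OF assms(1)] by unfold_locales
  moreover have "coprime a p" using assms by (meson prime_imp_coprime coprime_commute)
  ultimately have "[a ^ totient (nat p) = 1] (mod p)" by (rule residues.euler_theorem)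
  moreover have "prime (nat p)" using assms(1) prime_gt_0_int by simp
  ultimately show ?thesis by (simp add: totient_prime)
qed

lemma lucas_cong_sum_of_powers:
  fixes f g p :: int
  assumes "[f * f = f + 1] (mod p)" "[g * g = g + 1] (mod p)" "[f + g = 1] (mod p)"
  shows "[lucas n = f ^ n + g ^ n] (mod p)"
proof (rule cong_from_two_terms_mod[where i = 0])
  show "[lucas (Suc (Suc n)) = lucas n + lucas (Suc n)] (mod p)" for n
    by (simp add: fib_recD[OF fib_rec_lucas])
  have step: "[x ^ Suc (Suc n) = x ^ n + x ^ Suc n] (mod p)" if "[x * x = x + 1] (mod p)" for x n
    using cong_scalar_left[OF that, of "x ^ n"] by (simp add: algebra_simps)
  show "[f ^ Suc (Suc n) + g ^ Suc (Suc n) = (f ^ n + g ^ n) + (f ^ Suc n + g ^ Suc n)] (mod p)" for n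
    using cong_add[OF step[OF assms(1)] step[OF assms(2)], of n n] by (simp add: ac_simps)
  show "[lucas 0 = f ^ 0 + g ^ 0] (mod p)" "[lucas (Suc 0) = f ^ Suc 0 + g ^ Suc 0] (mod p)"
    using assms(3) by (simp_all add: cong_sym)
qed

lemma golden_roots_mod_prime:
  fixes p :: int
  assumes p: "prime p" "p > 2" and "QuadRes p 5"
  obtains f g where "[f * f = f + 1] (mod p)" "[g * g = g + 1] (mod p)"
    "[f + g = 1] (mod p)" "[f * g = -1] (mod p)"
proof -
  obtain s where "[s^2 = 5] (mod p)" using assms(3) unfolding QuadRes_def by blast
  then obtain k where k: "s^2 - 5 = p * k" by (metis cong_iff_dvd_diff dvdE)
  obtain q where "p = 2 * q + 1" using prime_odd_int[OF p] by (rule oddE)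
  then obtain h where h: "p = 2 * h - 1" by (intro that[of "q + 1"]) simp
  have "coprime 4 p" using prime_odd_int[OF p] coprime_power_left_iff[of 2 2 p] by simp
  then have cancel_4: "[4 * x = 4 * y] (mod p) \<Longrightarrow> [x = y] (mod p)" for x y
    using cong_mult_lcancel[of 4 p x y] by simp
  have root: "[x * x = x + 1] (mod p)" if "x = h * (1 + t)" "t^2 = s^2" for x t
  proof (rule cancel_4)
    have "4 * (x * x) - 4 * (x + 1) = (2 * h - 1) * ((2 * h + 1) * (1 + t)^2 - 2 * (1 + t)) + (t^2 - 5)"
      by (simp add: that(1) algebra_simps power2_eq_square)
    also have "\<dots> = p * ((2 * h + 1) * (1 + t)^2 - 2 * (1 + t) + k)"
      unfolding h[symmetric] that(2) k by (simp add: algebra_simps)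
    finally show "[4 * (x * x) = 4 * (x + 1)] (mod p)" by (simp add: cong_iff_dvd_diff)
  qed
  define f where "f = h * (1 + s)"
  define g where "g = h * (1 + - s)"
  have f: "[f * f = f + 1] (mod p)" and g: "[g * g = g + 1] (mod p)"
    using root[of f s] root[of g "- s"] by (simp_all add: f_def g_def)
  have "f + g - 1 = p" by (simp add: f_def g_def h algebra_simps)
  then have sum: "[f + g = 1] (mod p)" by (simp add: cong_iff_dvd_diff)
  have "4 * (f * g) - 4 * (-1) = (2 * h - 1) * ((2 * h + 1) * (1 - s^2)) - (s^2 - 5)"
    by (simp add: f_def g_def algebra_simps power2_eq_square)
  also have "\<dots> = p * ((2 * h + 1) * (1 - s^2) - k)"
    unfolding h[symmetric] k by (simp add: algebra_simps)
  finally have "[4 * (f * g) = 4 * (-1)] (mod p)"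
    unfolding cong_iff_dvd_diff by (rule dvdI)
  then have "[f * g = -1] (mod p)" by (rule cancel_4)
  with f g sum show ?thesis by (rule that)
qed

text \<open>The Lucas numbers are power sums of the two roots of \<open>X\<^sup>2 - X - 1\<close> modulo \<open>p\<close>, hence
  have period dividing \<open>p - 1\<close> by Fermat.\<close>
lemma lucas_periodic_mod_prime_if_QuadRes_5:
  fixes p :: int
  assumes p: "prime p" "p > 2" and "QuadRes p 5"
  shows "[lucas (n + (nat p - 1)) = lucas n] (mod p)"
proof -
  obtain f g where f: "[f * f = f + 1] (mod p)" and g: "[g * g = g + 1] (mod p)"
    and sum: "[f + g = 1] (mod p)" and "[f * g = -1] (mod p)"
    using golden_roots_mod_prime[OF assms] by blast
  then have "\<not> p dvd f * g"
    using p by (simp add: cong_dvd_iff)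
  then have "\<not> p dvd f" "\<not> p dvd g" by (auto dest: dvd_mult2 dvd_mult)
  then have "[f ^ (nat p - 1) = 1] (mod p)" "[g ^ (nat p - 1) = 1] (mod p)"
    using fermat_theorem_int[OF p(1)] by blast+
  then have "[f ^ n * f ^ (nat p - 1) + g ^ n * g ^ (nat p - 1) = f ^ n * 1 + g ^ n * 1] (mod p)"
    by (intro cong_add cong_scalar_left)
  then have "[lucas (n + (nat p - 1)) = f ^ n + g ^ n] (mod p)"
    using lucas_cong_sum_of_powers[OF f g sum, of "n + (nat p - 1)"] by (simp add: power_add cong_trans)
  then show ?thesis
    using lucas_cong_sum_of_powers[OF f g sum, of n] by (metis cong_sym cong_trans)
qed

lemma not_complete_mod_lucas_if_QuadRes_5:
  fixes p :: int
  assumes "prime p" "p > 2" "QuadRes p 5"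
  shows "\<not> complete_mod lucas p"
  by (rule not_complete_mod_if_short_period[of "nat p - 1"])
     (use assms lucas_periodic_mod_prime_if_QuadRes_5 in auto)

lemma fib_rec_cassini:
  assumes "fib_rec u"
  shows "u (Suc n)^2 - u n * u (Suc n) - u n^2 = (-1)^n * (u 1^2 - u 0 * u 1 - u 0^2)"
proof (induction n)
  case (Suc n)
  have "u (Suc (Suc n))^2 - u (Suc n) * u (Suc (Suc n)) - u (Suc n)^2
      = - (u (Suc n)^2 - u n * u (Suc n) - u n^2)"
    by (simp add: fib_recD[OF assms] algebra_simps power2_eq_square)
  then show ?case using Suc by simp
qed simp

lemma lucas_square_identity: "(2 * lucas (Suc n) - lucas n)^2 = 5 * (lucas n^2 - 4 * (-1)^n)"
proof -
  have "lucas (Suc n)^2 - lucas n * lucas (Suc n) - lucas n^2 = (-1)^n * (-5)"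
    using fib_rec_cassini[OF fib_rec_lucas, of n] by simp
  then show ?thesis by (simp add: algebra_simps power2_eq_square)
qed

lemma QuadRes_5_if_cong_5_times_square:
  fixes p t u :: int
  assumes "prime p" "\<not> p dvd u" "[t^2 = 5 * u^2] (mod p)"
  shows "QuadRes p 5"
proof -
  have "coprime u p" using assms(1,2) by (meson prime_imp_coprime coprime_commute)
  then obtain v where v: "[u * v = 1] (mod p)" using cong_solve_coprime_int by blast
  have "[(t * v)^2 = 5 * (u * v)^2] (mod p)"
    using cong_scalar_right[OF assms(3), of "v^2"] by (simp add: power_mult_distrib algebra_simps)
  also have "[5 * (u * v)^2 = 5 * 1^2] (mod p)"
    using cong_pow[OF v, of 2] by (rule cong_scalar_left)
  finally have "[(t * v)^2 = 5] (mod p)" by simp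
  then show ?thesis unfolding QuadRes_def by blast
qed

lemma QuadRes_double_root:
  fixes p y :: int
  assumes "prime p" "p > 2" "QuadRes p y" "\<not> [y = 0] (mod p)"
  obtains s where "[(2 * s)^2 = 4 * y] (mod p)" "\<not> p dvd 2 * s"
proof -
  obtain s where s: "[s^2 = y] (mod p)" using assms(3) unfolding QuadRes_def by blast
  have "\<not> p dvd s"
  proof
    assume "p dvd s"
    then have "[s^2 = 0] (mod p)" by (simp add: cong_0_iff power2_eq_square)
    then show False using assms(4) cong_trans[OF cong_sym[OF s]] by blast
  qed
  moreover have "\<not> p dvd 2" using assms(2) zdvd_imp_le[of p 2] by auto
  ultimately have "\<not> p dvd 2 * s" using assms(1) by (simp add: prime_dvd_mult_iff)
  moreover have "[(2 * s)^2 = 4 * y] (mod p)"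
    using cong_scalar_left[OF s, of 4] by (simp add: power_mult_distrib)
  ultimately show ?thesis using that by blast
qed

text \<open>By the square identity, \<open>L\<^sub>n \<equiv> x\<close> would make \<open>5 (x\<^sup>2 \<mp> 4)\<close> a square, so when
  \<open>5\<close> is a non-residue, \<open>x\<close> is missed as soon as \<open>x\<^sup>2 - 4\<close> and \<open>x\<^sup>2 + 4\<close> are nonzero squares.\<close>
lemma lucas_avoids_residue_mod_prime:
  fixes p x a b :: int
  assumes p: "prime p" "\<not> QuadRes p 5"
    and a: "\<not> p dvd a" "[x^2 - 4 = a^2] (mod p)"
    and b: "\<not> p dvd b" "[x^2 + 4 = b^2] (mod p)"
  shows "\<not> [lucas n = x] (mod p)"
proof
  assume "[lucas n = x] (mod p)"
  then have "[(2 * lucas (Suc n) - lucas n)^2 = 5 * (x^2 - 4 * (-1)^n)] (mod p)"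
    unfolding lucas_square_identity by (intro cong_scalar_left cong_diff cong_pow cong_refl)
  moreover have "[5 * (x^2 - 4 * (-1)^n) = 5 * (if even n then a else b)^2] (mod p)"
    using a(2) b(2) by (intro cong_scalar_left) simp
  ultimately have "[(2 * lucas (Suc n) - lucas n)^2 = 5 * (if even n then a else b)^2] (mod p)"
    by (rule cong_trans)
  moreover have "\<not> p dvd (if even n then a else b)" using a(1) b(1) by simp
  ultimately show False using QuadRes_5_if_cong_5_times_square[OF p(1)] p(2) by blast
qed

lemma not_complete_mod_lucas_if_QuadRes_neg1:
  fixes p :: int
  assumes p: "prime p" "p > 2" and "\<not> QuadRes p 5" "QuadRes p (-1)"
  shows "\<not> complete_mod lucas p"
proof -
  have "\<not> [-1 = 0] (mod p)" using p by (simp add: cong_0_iff)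
  then obtain i where i: "[(2 * i)^2 = 4 * -1] (mod p)" "\<not> p dvd 2 * i"
    using QuadRes_double_root[OF p assms(4)] by blast
  have "[0^2 - 4 = (2 * i)^2] (mod p)" using cong_sym[OF i(1)] by simp
  moreover have "\<not> p dvd 2" using p zdvd_imp_le[of p 2] by auto
  moreover have "[0^2 + 4 = 2^2] (mod p)" by simp
  ultimately show ?thesis
    using lucas_avoids_residue_mod_prime[where x = 0 and a = "2 * i" and b = 2, OF p(1) assms(3) i(2)]
    unfolding complete_mod_def by blast
qed

lemma Legendre_cong:
  assumes "[a = b] (mod p)"
  shows "Legendre a p = Legendre b p"
proof -
  have "[a = 0] (mod p) \<longleftrightarrow> [b = 0] (mod p)"
    using assms cong_sym cong_trans by blast
  moreover have "QuadRes p a \<longleftrightarrow> QuadRes p b"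
    unfolding QuadRes_def using assms cong_sym cong_trans by blast
  ultimately show ?thesis by (simp add: Legendre_def)
qed

lemma Legendre_values: "Legendre a p = -1 \<or> Legendre a p = 0 \<or> Legendre a p = 1"
  by (simp add: Legendre_def)

lemma Legendre_eq_1_iff: "Legendre a p = 1 \<longleftrightarrow> QuadRes p a \<and> \<not> [a = 0] (mod p)"
  by (simp add: Legendre_def)

lemma Legendre_one:
  assumes "prime p"
  shows "Legendre 1 p = 1"
proof -
  have "\<not> [1 = 0] (mod p)" using prime_gt_1_int[OF assms] by (simp add: cong_0_iff)
  moreover have "QuadRes p 1" unfolding QuadRes_def by (intro exI[of _ 1]) simp
  ultimately show ?thesis by (simp add: Legendre_def)
qed

lemma Legendre_mult:
  fixes p :: int
  assumes "prime p" "p > 2"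
  shows "Legendre (a * b) p = Legendre a p * Legendre b p"
proof -
  define e where "e = (nat p - 1) div 2"
  have "prime (nat p)" "2 < nat p" "int (nat p) = p" using assms by auto
  then have euler: "[Legendre x p = x ^ e] (mod p)" for x
    using euler_criterion[of "nat p" x] unfolding e_def by simp
  have "[Legendre a p * Legendre b p = (a * b) ^ e] (mod p)"
    using cong_mult[OF euler[of a] euler[of b]] by (simp add: power_mult_distrib)
  then have "[Legendre (a * b) p = Legendre a p * Legendre b p] (mod p)"
    using cong_trans[OF euler[of "a * b"] cong_sym] by blast
  then have dvd: "p dvd Legendre (a * b) p - Legendre a p * Legendre b p" (is "p dvd ?d")
    by (simp add: cong_iff_dvd_diff)
  have "\<bar>?d\<bar> < p"
    using Legendre_values[of "a * b" p] Legendre_values[of a p] Legendre_values[of b p] assms(2)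
    by auto
  then have "?d = 0" using dvd_imp_le_int[OF _ dvd] by (cases "?d = 0") auto
  then show ?thesis by simp
qed

lemma sum_mod_reindex:
  fixes p :: int and h :: "int \<Rightarrow> int"
  assumes p: "p > 0" and h: "\<And>x y. [x = y] (mod p) \<Longrightarrow> h x = h y"
    and inj: "\<And>x y. x \<in> {0..<p} \<Longrightarrow> y \<in> {0..<p} \<Longrightarrow> [\<sigma> x = \<sigma> y] (mod p) \<Longrightarrow> x = y"
  shows "(\<Sum>z\<in>{0..<p}. h (\<sigma> z)) = (\<Sum>z\<in>{0..<p}. h z)"
proof -
  define \<tau> where "\<tau> z = \<sigma> z mod p" for z
  have "inj_on \<tau> {0..<p}"
  proof (rule inj_onI)
    fix x y assume "x \<in> {0..<p}" "y \<in> {0..<p}" "\<tau> x = \<tau> y"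
    then show "x = y" using inj[of x y] unfolding \<tau>_def cong_def by blast
  qed
  moreover have "\<tau> ` {0..<p} \<subseteq> {0..<p}" using p by (auto simp: \<tau>_def)
  ultimately have "bij_betw \<tau> {0..<p} {0..<p}"
    using endo_inj_surj[of "{0..<p}" \<tau>] by (simp add: bij_betw_def)
  then have "(\<Sum>z\<in>{0..<p}. h (\<tau> z)) = (\<Sum>z\<in>{0..<p}. h z)"
    by (rule sum.reindex_bij_betw)
  moreover have "h (\<sigma> z) = h (\<tau> z)" for z
    unfolding \<tau>_def by (rule h) (simp add: cong_def)
  ultimately show ?thesis by simp
qed

lemma sum_mod_shift:
  fixes p c :: int and h :: "int \<Rightarrow> int"
  assumes "p > 0" "\<And>x y. [x = y] (mod p) \<Longrightarrow> h x = h y"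
  shows "(\<Sum>z\<in>{0..<p}. h (z + c)) = (\<Sum>z\<in>{0..<p}. h z)"
proof (rule sum_mod_reindex[OF assms])
  fix x y assume "x \<in> {0..<p}" "y \<in> {0..<p}" "[x + c = y + c] (mod p)"
  then have "[x = y] (mod p)" by (simp only: cong_add_rcancel)
  with \<open>x \<in> {0..<p}\<close> \<open>y \<in> {0..<p}\<close> show "x = y" by (simp add: cong_def)
qed

lemma sum_mod_neg:
  fixes p :: int and h :: "int \<Rightarrow> int"
  assumes "p > 0" "\<And>x y. [x = y] (mod p) \<Longrightarrow> h x = h y"
  shows "(\<Sum>z\<in>{0..<p}. h (- z)) = (\<Sum>z\<in>{0..<p}. h z)"
proof (rule sum_mod_reindex[OF assms])
  fix x y assume "x \<in> {0..<p}" "y \<in> {0..<p}" "[- x = - y] (mod p)"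
  then have "[x = y] (mod p)" by (simp only: cong_minus_minus_iff)
  with \<open>x \<in> {0..<p}\<close> \<open>y \<in> {0..<p}\<close> show "x = y" by (simp add: cong_def)
qed

context
  fixes p :: int
  assumes prime: "prime p" and odd: "p > 2" and not_QuadRes_neg1: "\<not> QuadRes p (-1)"
begin

private lemma not_cong_0_if_range: "1 \<le> z \<Longrightarrow> z < p \<Longrightarrow> \<not> [z = 0] (mod p)"
  by (simp add: cong_def)

lemma Legendre_neg1: "Legendre (-1) p = -1"
  using not_QuadRes_neg1 odd by (simp add: Legendre_def cong_0_iff)

lemma Legendre_uminus: "Legendre (- a) p = - Legendre a p"
  using Legendre_mult[OF prime odd, of "-1" a] Legendre_neg1 by simp

lemma Legendre_square_eq_1: "\<not> [z = 0] (mod p) \<Longrightarrow> Legendre z p * Legendre z p = 1"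
  using Legendre_values[of z p] by (auto simp: Legendre_def)

lemma sum_Legendre: "(\<Sum>z\<in>{0..<p}. Legendre (z + c) p) = 0"
proof -
  have "(\<Sum>z\<in>{0..<p}. Legendre (- z) p) = (\<Sum>z\<in>{0..<p}. Legendre z p)"
    by (rule sum_mod_neg) (use odd Legendre_cong in auto)
  then have "(\<Sum>z\<in>{0..<p}. Legendre z p) = 0"
    by (simp add: Legendre_uminus sum_negf)
  moreover have "(\<Sum>z\<in>{0..<p}. Legendre (z + c) p) = (\<Sum>z\<in>{0..<p}. Legendre z p)"
    by (rule sum_mod_shift[where h = "\<lambda>z. Legendre z p"]) (use odd Legendre_cong in auto)
  ultimately show ?thesis by simp
qed

text \<open>For \<open>z \<noteq> 0\<close>, \<open>(z | p) (z + c | p) = (1 + c z\<^sup>-\<^sup>1 | p)\<close>, and \<open>1 + c z\<^sup>-\<^sup>1\<close> runs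
  through all residues except \<open>1\<close>.\<close>
lemma sum_Legendre_times_translate:
  assumes c: "\<not> [c = 0] (mod p)"
  shows "(\<Sum>z\<in>{0..<p}. Legendre z p * Legendre (z + c) p) = -1"
proof -
  define \<sigma> where "\<sigma> z = (if z = 0 then 0 else c * z ^ (nat p - 2))" for z
  have z_\<sigma>: "[z * \<sigma> z = c] (mod p)" if "z \<in> {1..<p}" for z
  proof -
    have "\<not> p dvd z" using that zdvd_imp_le[of p z] by auto
    then have "[z ^ Suc (nat p - 2) = 1] (mod p)"
      using fermat_theorem_int[OF prime] odd by (simp add: Suc_diff_Suc numeral_2_eq_2)
    then show ?thesis
      using that cong_scalar_left[of "z ^ Suc (nat p - 2)" 1 p c] by (simp add: \<sigma>_def ac_simps)
  qed
  have \<sigma>_nonzero: "\<not> [\<sigma> z = 0] (mod p)" if "z \<in> {1..<p}" for z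
    using z_\<sigma>[OF that] c cong_scalar_left[of "\<sigma> z" 0 p z] by (metis cong_sym cong_trans mult_zero_right)
  have inj: "x = y" if "x \<in> {0..<p}" "y \<in> {0..<p}" "[\<sigma> x = \<sigma> y] (mod p)" for x y
  proof (cases "x = 0 \<or> y = 0")
    case True
    have zero: "z = 0" if "z \<in> {0..<p}" "[\<sigma> z = 0] (mod p)" for z
      using \<sigma>_nonzero[of z] that by fastforce
    have "\<sigma> 0 = 0" by (simp add: \<sigma>_def)
    with True that(3) show ?thesis
      using zero[OF that(1)] zero[OF that(2)] by (auto dest: cong_sym)
  next
    case False
    then have xy: "x \<in> {1..<p}" "y \<in> {1..<p}" using that by auto
    have "[x * \<sigma> x = y * \<sigma> x] (mod p)"
      using z_\<sigma>[OF xy(1)] z_\<sigma>[OF xy(2)] cong_scalar_left[OF cong_sym[OF that(3)], of y]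
      by (metis cong_sym cong_trans)
    moreover have "coprime (\<sigma> x) p"
      using \<sigma>_nonzero[OF xy(1)] prime by (simp add: cong_0_iff prime_imp_coprime coprime_commute)
    ultimately have "[x = y] (mod p)" using cong_mult_rcancel by blast
    then show ?thesis using that by (simp add: cong_def)
  qed
  have terms: "Legendre z p * Legendre (z + c) p = Legendre (1 + \<sigma> z) p" if "z \<in> {1..<p}" for z
  proof -
    have "[z * (1 + \<sigma> z) = z + c] (mod p)"
      using z_\<sigma>[OF that] by (simp add: distrib_left cong_add_lcancel)
    then have "Legendre z p * Legendre (1 + \<sigma> z) p = Legendre (z + c) p"
      using Legendre_cong Legendre_mult[OF prime odd] by metis
    then show ?thesis
      using Legendre_square_eq_1[OF not_cong_0_if_range] that by (metis atLeastLessThan_iff mult.assoc mult_1)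
  qed
  have split: "{0..<p} = insert 0 {1..<p}" using odd by auto
  have "(\<Sum>z\<in>{0..<p}. Legendre (1 + \<sigma> z) p) = (\<Sum>z\<in>{0..<p}. Legendre (1 + z) p)"
    by (rule sum_mod_reindex[OF _ _ inj]) (use odd in simp, rule Legendre_cong, simp add: cong_add_lcancel)
  also have "\<dots> = 0" using sum_Legendre[of 1] by (simp add: add.commute)
  finally have "(\<Sum>z\<in>{1..<p}. Legendre (1 + \<sigma> z) p) = - 1"
    unfolding split using Legendre_one[OF prime] by (simp add: \<sigma>_def)
  moreover have "(\<Sum>z\<in>{0..<p}. Legendre z p * Legendre (z + c) p)
      = (\<Sum>z\<in>{1..<p}. Legendre z p * Legendre (z + c) p)"
    unfolding split by (simp add: Legendre_def)
  moreover have "\<dots> = (\<Sum>z\<in>{1..<p}. Legendre (1 + \<sigma> z) p)"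
    by (rule sum.cong) (simp_all add: terms)
  ultimately show ?thesis by simp
qed

lemma sum_Legendre_shift_times_translate:
  assumes "\<not> [c = 0] (mod p)"
  shows "(\<Sum>z\<in>{0..<p}. Legendre (z + d) p * Legendre (z + d + c) p) = -1"
proof -
  have "(\<Sum>z\<in>{0..<p}. Legendre (z + d) p * Legendre (z + d + c) p)
      = (\<Sum>z\<in>{0..<p}. Legendre z p * Legendre (z + c) p)"
  proof (rule sum_mod_shift[where h = "\<lambda>z. Legendre z p * Legendre (z + c) p"])
    fix x y assume xy: "[x = y] (mod p)"
    then show "Legendre x p * Legendre (x + c) p = Legendre y p * Legendre (y + c) p"
      using Legendre_cong[OF xy] Legendre_cong[OF cong_add[OF xy cong_refl[of c]]] by simp
  qed (use odd in simp)
  then show ?thesis using sum_Legendre_times_translate[OF assms] by simp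
qed

text \<open>Since \<open>(-1 | p) = -1\<close>, the summand is odd under \<open>z \<mapsto> -z\<close>.\<close>
lemma sum_Legendre_triple: "(\<Sum>z\<in>{0..<p}. Legendre (z - 1) p * Legendre z p * Legendre (z + 1) p) = 0"
proof -
  define h where "h z = Legendre (z - 1) p * Legendre z p * Legendre (z + 1) p" for z
  have "(\<Sum>z\<in>{0..<p}. h (- z)) = (\<Sum>z\<in>{0..<p}. h z)"
  proof (rule sum_mod_neg)
    fix x y assume xy: "[x = y] (mod p)"
    then show "h x = h y"
      using Legendre_cong[OF xy] Legendre_cong[OF cong_add[OF xy cong_refl[of 1]]]
        Legendre_cong[OF cong_diff[OF xy cong_refl[of 1]]]
      by (simp add: h_def)
  qed (use odd in simp)
  moreover have "h (- z) = - h z" for z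
  proof -
    have "- z - 1 = - (z + 1)" "- z + 1 = - (z - 1)" by simp_all
    then have "h (- z) = Legendre (- (z + 1)) p * Legendre (- z) p * Legendre (- (z - 1)) p"
      unfolding h_def by (simp only:)
    then show ?thesis unfolding Legendre_uminus by (simp add: h_def)
  qed
  ultimately show ?thesis by (simp add: h_def sum_negf)
qed

lemma sum_Legendre_triple_indicator:
  "(\<Sum>z\<in>{0..<p}. (1 + Legendre (z - 1) p) * (1 + Legendre z p) * (1 + Legendre (z + 1) p)) = p - 3"
proof -
  have not_0: "\<not> [1 = 0] (mod p)" "\<not> [2 = 0] (mod p)"
    using odd by (simp_all add: cong_def)
  have expand: "(1 + Legendre (z - 1) p) * (1 + Legendre z p) * (1 + Legendre (z + 1) p)
    = 1 + Legendre (z + -1) p + Legendre (z + 0) p + Legendre (z + 1) p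
      + Legendre (z + -1) p * Legendre (z + -1 + 1) p
      + Legendre (z + -1) p * Legendre (z + -1 + 2) p
      + Legendre (z + 0) p * Legendre (z + 0 + 1) p
      + Legendre (z - 1) p * Legendre z p * Legendre (z + 1) p" for z
    by (simp add: algebra_simps)
  have "(\<Sum>z\<in>{0..<p}. (1::int)) = p" using odd by simp
  then show ?thesis
    unfolding expand sum.distrib sum_Legendre sum_Legendre_triple
      sum_Legendre_shift_times_translate[OF not_0(1)] sum_Legendre_shift_times_translate[OF not_0(2)]
    by simp
qed

text \<open>Without such a triple the summand of the previous sum vanishes at every \<open>z \<noteq> 1\<close>
  (at \<open>z = 0\<close> and \<open>z = -1\<close> because \<open>(-1 | p) = -1\<close>) and is at most \<open>4\<close> at \<open>z = 1\<close>.\<close>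
lemma consecutive_QuadRes_triple:
  assumes "p \<ge> 11"
  shows "\<exists>z. Legendre (z - 1) p = 1 \<and> Legendre z p = 1 \<and> Legendre (z + 1) p = 1"
proof (rule ccontr)
  assume no_triple: "\<not> ?thesis"
  define T where "T z = (1 + Legendre (z - 1) p) * (1 + Legendre z p) * (1 + Legendre (z + 1) p)" for z
  have T_0: "T z = 0" if z: "z \<in> {0..<p}" "z \<noteq> 1" for z
  proof -
    have "z = 0 \<or> z = p - 1 \<or> 2 \<le> z \<and> z \<le> p - 2" using z by auto
    then consider "z = 0" | "z = p - 1" | "2 \<le> z \<and> z \<le> p - 2" by blast
    then show ?thesis
    proof cases
      case 1
      then have "Legendre (z - 1) p = -1" using Legendre_neg1 by simp
      then show ?thesis by (simp add: T_def)
    next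
      case 2
      then have "[z = -1] (mod p)" by (simp add: cong_iff_dvd_diff)
      from Legendre_cong[OF this] have "Legendre z p = -1" using Legendre_neg1 by simp
      then show ?thesis by (simp add: T_def)
    next
      case 3
      then have "\<not> [z - 1 = 0] (mod p)" "\<not> [z = 0] (mod p)" "\<not> [z + 1 = 0] (mod p)"
        by (simp_all add: not_cong_0_if_range)
      then have "Legendre (z - 1) p \<noteq> 0" "Legendre z p \<noteq> 0" "Legendre (z + 1) p \<noteq> 0"
        by (simp_all add: Legendre_def)
      then have "Legendre (z - 1) p = -1 \<or> Legendre z p = -1 \<or> Legendre (z + 1) p = -1"
        using no_triple z Legendre_values[of "z - 1" p] Legendre_values[of z p]
          Legendre_values[of "z + 1" p] by blast
      then show ?thesis by (auto simp: T_def)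
    qed
  qed
  have "T 1 \<le> 4"
    using Legendre_values[of 2 p] by (auto simp: T_def Legendre_one[OF prime] Legendre_def)
  moreover have "(\<Sum>z\<in>{0..<p}. T z) = T 1 + (\<Sum>z\<in>{0..<p} - {1}. T z)"
    by (rule sum.remove) (use assms in auto)
  moreover have "(\<Sum>z\<in>{0..<p} - {1}. T z) = 0" by (rule sum.neutral) (auto simp: T_0)
  ultimately show False
    using sum_Legendre_triple_indicator assms unfolding T_def by simp
qed

end

lemma not_complete_mod_lucas_if_not_QuadRes_neg1:
  fixes p :: int
  assumes p: "prime p" "p \<ge> 11" and "\<not> QuadRes p 5" "\<not> QuadRes p (-1)"
  shows "\<not> complete_mod lucas p"
proof -
  have odd: "p > 2" using p by simp
  obtain z where z: "Legendre (z - 1) p = 1" "Legendre z p = 1" "Legendre (z + 1) p = 1"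
    using consecutive_QuadRes_triple[OF p(1) odd assms(4) p(2)] by blast
  from z(1) obtain a where a: "[(2 * a)^2 = 4 * (z - 1)] (mod p)" "\<not> p dvd 2 * a"
    unfolding Legendre_eq_1_iff using QuadRes_double_root[OF p(1) odd] by blast
  from z(2) obtain w where w: "[(2 * w)^2 = 4 * z] (mod p)"
    unfolding Legendre_eq_1_iff using QuadRes_double_root[OF p(1) odd] by blast
  from z(3) obtain b where b: "[(2 * b)^2 = 4 * (z + 1)] (mod p)" "\<not> p dvd 2 * b"
    unfolding Legendre_eq_1_iff using QuadRes_double_root[OF p(1) odd] by blast
  have "[(2 * w)^2 - 4 = 4 * (z - 1)] (mod p)"
    using cong_diff[OF w cong_refl[of 4]] by (simp add: algebra_simps)
  also note cong_sym[OF a(1)]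
  finally have minus: "[(2 * w)^2 - 4 = (2 * a)^2] (mod p)" .
  have "[(2 * w)^2 + 4 = 4 * (z + 1)] (mod p)"
    using cong_add[OF w cong_refl[of 4]] by (simp add: algebra_simps)
  also note cong_sym[OF b(1)]
  finally have plus: "[(2 * w)^2 + 4 = (2 * b)^2] (mod p)" .
  show ?thesis
    using lucas_avoids_residue_mod_prime[OF p(1) assms(3) a(2) minus b(2) plus]
    unfolding complete_mod_def by blast
qed

lemma not_complete_mod_lucas_prime:
  fixes p :: int
  assumes "prime p" "p \<ge> 11"
  shows "\<not> complete_mod lucas p"
proof (cases "QuadRes p 5")
  case True
  then show ?thesis using not_complete_mod_lucas_if_QuadRes_5 assms by simp
next
  case False
  then show ?thesis
    using not_complete_mod_lucas_if_QuadRes_neg1 not_complete_mod_lucas_if_not_QuadRes_neg1 assms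
    by (cases "QuadRes p (-1)") simp_all
qed

section \<open>Powers of 3\<close>

lemma fib_rec_add_8:
  assumes "fib_rec u" shows "u (n + 8) = 13 * u n + 21 * u (Suc n)"
  by (simp add: eval_nat_numeral fib_recD[OF assms] algebra_simps)

lemma fib_rec_shift_3_pow:
  assumes "fib_rec u"
  shows "\<exists>Y. fib_rec Y \<and> (\<forall>n. u (n + 8 * 3^k) = u n + 3^Suc k * Y n) \<and> (\<forall>n. [Y n = u (n + 2)] (mod 3))"
  using assms
proof (induction k arbitrary: u)
  case 0
  note u = "0.prems"
  define Y where "Y n = 4 * u n + 7 * u (Suc n)" for n
  have "fib_rec Y" unfolding Y_def by (intro fib_rec_lincomb fib_rec_shift[of _ 1, simplified] u)
  moreover have "u (n + 8 * 3^0) = u n + 3^Suc 0 * Y n" for n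
    using fib_rec_add_8[OF u] by (simp add: Y_def)
  moreover have "[Y n = u (n + 2)] (mod 3)" for n
  proof -
    have "Y n - u (n + 2) = 3 * (u n + 2 * u (Suc n))"
      by (simp add: Y_def numeral_2_eq_2 fib_recD[OF u])
    then show ?thesis by (simp add: cong_iff_dvd_diff)
  qed
  ultimately show ?case by blast
next
  case (Suc k)
  define N :: nat where "N = 8 * 3^k"
  define M :: int where "M = 3^Suc k"
  obtain Y1 where Y1: "fib_rec Y1" "\<And>n. u (n + N) = u n + M * Y1 n" "\<And>n. [Y1 n = u (n + 2)] (mod 3)"
    using Suc.IH[OF Suc.prems] unfolding N_def M_def by blast
  obtain Y2 where Y2: "fib_rec Y2" "\<And>n. Y1 (n + N) = Y1 n + M * Y2 n"
    using Suc.IH[OF Y1(1)] unfolding N_def M_def by blast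
  obtain Y3 where Y3: "fib_rec Y3" "\<And>n. Y2 (n + N) = Y2 n + M * Y3 n"
    using Suc.IH[OF Y2(1)] unfolding N_def M_def by blast
  define Y where "Y n = Y1 n + M * Y2 n + 3^k * M * Y3 n" for n
  have "fib_rec Y"
    unfolding Y_def using Y1(1) Y2(1) Y3(1)
    by (intro fib_rec_lincomb[where a = 1, simplified]) (auto intro: fib_rec_lincomb)
  moreover have "u (n + 8 * 3^Suc k) = u n + 3^Suc (Suc k) * Y n" for n
  proof -
    have Y1_2N: "Y1 (n + N + N) = Y1 n + 2 * M * Y2 n + M * M * Y3 n"
      using Y2(2)[of "n + N"] Y2(2)[of n] Y3(2)[of n] by (simp add: algebra_simps)
    have u_2N: "u (n + N + N) = u n + 2 * M * Y1 n + M * M * Y2 n"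
      using Y1(2)[of "n + N"] Y1(2)[of n] Y2(2)[of n] by (simp add: algebra_simps)
    have "n + 8 * 3^Suc k = n + N + N + N" by (simp add: N_def)
    then have "u (n + 8 * 3^Suc k) = u n + 3 * M * Y1 n + 3 * (M * M) * Y2 n + M * M * M * Y3 n"
      using Y1(2)[of "n + N + N"] u_2N Y1_2N by (simp add: algebra_simps)
    also have "\<dots> = u n + 3^Suc (Suc k) * Y n"
      by (simp add: Y_def M_def algebra_simps)
    finally show ?thesis .
  qed
  moreover have "[Y n = u (n + 2)] (mod 3)" for n
  proof -
    have "[Y n = Y1 n] (mod 3)"
      by (simp add: Y_def M_def cong_iff_dvd_diff)
    then show ?thesis using Y1(3) by (rule cong_trans)
  qed
  ultimately show ?case by blast
qed

lemma fib_rec_cong_3_pow: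
  assumes "fib_rec u"
  shows "[u (n + t * (8 * 3^k)) = u n + int t * 3^Suc k * u (n + 2)] (mod 3^Suc (Suc k))"
proof -
  define N :: nat where "N = 8 * 3^k"
  define M :: int where "M = 3^Suc k"
  obtain Y where Y: "\<And>m. u (m + N) = u m + M * Y m" "\<And>m. [Y m = u (m + 2)] (mod 3)"
    using fib_rec_shift_3_pow[OF assms] unfolding N_def M_def by blast
  have "[u (m + N) = u m] (mod 3)" for m
    using Y(1)[of m] by (simp add: M_def cong_iff_dvd_diff)
  then have period_3: "[u (n + t * N + 2) = u (n + 2)] (mod 3)" for t
    using periodic_mod_mult[where u = u, of N 3 "n + 2" t] by (simp add: ac_simps)
  have step: "[u (m + N) = u m + M * u (n + 2)] (mod 3 * M)"
    if "[u (m + 2) = u (n + 2)] (mod 3)" for m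
  proof -
    have "3 dvd Y m - u (n + 2)"
      using cong_trans[OF Y(2) that] by (simp add: cong_iff_dvd_diff)
    then have "3 * M dvd M * Y m - M * u (n + 2)"
      by (metis mult.commute mult_dvd_mono dvd_refl right_diff_distrib)
    then show ?thesis using Y(1)[of m] by (simp add: cong_iff_dvd_diff)
  qed
  have "[u (n + t * N) = u n + int t * M * u (n + 2)] (mod 3 * M)"
  proof (induction t)
    case (Suc t)
    have "[u (n + t * N + N) = u (n + t * N) + M * u (n + 2)] (mod 3 * M)"
      by (rule step[OF period_3])
    also have "[u (n + t * N) + M * u (n + 2) = (u n + int t * M * u (n + 2)) + M * u (n + 2)] (mod 3 * M)"
      using Suc.IH by (rule cong_add[OF _ cong_refl])
    finally show ?case by (simp add: algebra_simps)
  qed simp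
  then show ?thesis by (simp add: N_def M_def)
qed

lemma fib_rec_det_step:
  assumes "fib_rec u"
  shows "u (Suc n) * u (Suc n + 3) - u (Suc n + 1) * u (Suc n + 2)
    = - (u n * u (n + 3) - u (n + 1) * u (n + 2))"
  by (simp add: eval_nat_numeral fib_recD[OF assms] algebra_simps)

lemma lucas_det: "lucas n * lucas (n + 3) - lucas (n + 1) * lucas (n + 2) = 5 * (-1)^n"
proof (induction n)
  case 0
  then show ?case by (simp add: lucas_def eval_nat_numeral)
next
  case (Suc n)
  then show ?case using fib_rec_det_step[OF fib_rec_lucas, of n] by simp
qed

lemma square_cong_1_mod_3:
  fixes c :: int
  assumes "\<not> 3 dvd c"
  shows "[c^2 = 1] (mod 3)"
proof -
  have "c mod 3 = 1 \<or> c mod 3 = 2" using assms by presburger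
  moreover have "[c^2 = (c mod 3)^2] (mod 3)" by (simp add: cong_def power_mod)
  ultimately show ?thesis by (auto simp: cong_def)
qed

lemma lucas_lift_mod_3_pow:
  fixes x c e \<gamma> :: int
  assumes x: "x = c * lucas (j + a) + 3^Suc k * e"
    and solved: "[\<gamma> * lucas (j + a) + int t * c * lucas (j + a + 2) = e] (mod 3)"
  shows "[x = (c + 3^Suc k * \<gamma>) * lucas (j + a + t * (8 * 3^k))] (mod 3^Suc (Suc k))"
proof -
  define M :: int where "M = 3^Suc k"
  define L where "L i = lucas (j + i)" for i
  have "3 dvd \<gamma> * L a + int t * c * L (a + 2) - e"
    using solved by (simp add: L_def cong_iff_dvd_diff add.assoc)
  then have "3 * M dvd M * (\<gamma> * L a + int t * c * L (a + 2) - e)"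
    by (metis mult.commute mult_dvd_mono dvd_refl)
  moreover have "3 * M dvd M * M * (\<gamma> * int t * L (a + 2))"
    by (simp add: M_def)
  moreover have "(c + M * \<gamma>) * (L a + int t * M * L (a + 2)) - x
      = M * (\<gamma> * L a + int t * c * L (a + 2) - e) + M * M * (\<gamma> * int t * L (a + 2))"
    by (simp add: x L_def M_def algebra_simps)
  ultimately have "3 * M dvd (c + M * \<gamma>) * (L a + int t * M * L (a + 2)) - x"
    by simp
  then have "[x = (c + M * \<gamma>) * (L a + int t * M * L (a + 2))] (mod 3 * M)"
    by (simp add: cong_iff_dvd_diff dvd_diff_commute)
  also have "[L a + int t * M * L (a + 2) = lucas (j + a + t * (8 * 3^k))] (mod 3 * M)"
    using fib_rec_cong_3_pow[OF fib_rec_lucas, of "j + a" t k]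
    by (simp add: L_def M_def ac_simps cong_sym_eq)
  then have "[(c + M * \<gamma>) * (L a + int t * M * L (a + 2))
      = (c + M * \<gamma>) * lucas (j + a + t * (8 * 3^k))] (mod 3 * M)"
    by (rule cong_scalar_left)
  finally show ?thesis by (simp add: M_def)
qed

text \<open>Hensel-type lifting from \<open>M = 3\<^bsup>k+1\<^esup>\<close> to \<open>3M\<close>: replace \<open>c\<close> by \<open>c + M\<gamma>\<close> and \<open>j\<close> by
  \<open>j + t \<cdot> 8 \<cdot> 3\<^sup>k\<close>. The linear system for \<open>(\<gamma>, t)\<close> modulo \<open>3\<close> has determinant
  \<open>c (L\<^sub>j\<^sub>+\<^sub>1 L\<^sub>j\<^sub>+\<^sub>4 - L\<^sub>j\<^sub>+\<^sub>2 L\<^sub>j\<^sub>+\<^sub>3) = \<plusminus>5c\<close>, a unit modulo \<open>3\<close>; the explicit solution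
  below is Cramer's rule multiplied by the square of that determinant.\<close>
lemma lucas_pairs_cover_3_pow_Suc:
  assumes "lucas_pairs_cover (3^Suc k)"
  shows "lucas_pairs_cover (3^Suc (Suc k))"
  unfolding lucas_pairs_cover_def
proof (intro allI impI)
  fix x y :: int
  assume "coprime x y"
  define M :: int where "M = 3^Suc k"
  obtain c j where "coprime c M"
    and xj: "[x = c * lucas (Suc j)] (mod M)" and yj: "[y = c * lucas (Suc (Suc j))] (mod M)"
    using assms \<open>coprime x y\<close> unfolding lucas_pairs_cover_def M_def by blast
  define L where "L i = lucas (j + i)" for i
  obtain e where e: "x = c * L 1 + M * e"
    using cong_sym[OF xj] unfolding cong_iff_lin L_def by auto
  obtain f where f: "y = c * L 2 + M * f"
    using cong_sym[OF yj] unfolding cong_iff_lin L_def by (auto simp: numeral_2_eq_2)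
  have "3 dvd M" by (simp add: M_def)
  then have c: "\<not> 3 dvd c"
    using \<open>coprime c M\<close> coprime_common_divisor[of c M 3] by auto
  define d where "d = L 1 * L 4 - L 2 * L 3"
  have "d^2 = 25"
    using lucas_det[of "j + 1"] by (simp add: d_def L_def eval_nat_numeral power_mult_distrib)
  then have "[(c * d)^2 = 1 * 25] (mod 3)"
    using cong_scalar_right[OF square_cong_1_mod_3[OF c], of 25] by (simp add: power_mult_distrib)
  then have cd: "[e' * (c * d)^2 = e'] (mod 3)" for e'
    using cong_scalar_left[of "(c * d)^2" 1 3 e'] by (simp add: cong_def)
  define \<gamma> where "\<gamma> = c * d * (e * c * L 4 - f * c * L 3)"
  define \<tau> where "\<tau> = c * d * (L 1 * f - L 2 * e)"
  define t where "t = nat (\<tau> mod 3)"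
  have t: "[int t = \<tau>] (mod 3)" by (simp add: t_def cong_def)
  have solve: "[\<gamma> * L a + int t * c * L b = e'] (mod 3)"
    if "\<gamma> * L a + \<tau> * c * L b = e' * (c * d)^2" for a b e'
  proof -
    have "[\<gamma> * L a + int t * c * L b = \<gamma> * L a + \<tau> * c * L b] (mod 3)"
      using cong_add[OF cong_refl cong_scalar_right[OF t, of "c * L b"]] by (simp add: mult.assoc)
    also have "\<gamma> * L a + \<tau> * c * L b = e' * (c * d)^2" by (fact that)
    also have "[e' * (c * d)^2 = e'] (mod 3)" by (fact cd)
    finally show ?thesis .
  qed
  have "\<gamma> * L 1 + \<tau> * c * L 3 = e * (c * d)^2" "\<gamma> * L 2 + \<tau> * c * L 4 = f * (c * d)^2"
    by (simp_all add: \<gamma>_def \<tau>_def d_def algebra_simps power2_eq_square)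
  then have "[\<gamma> * L 1 + int t * c * L 3 = e] (mod 3)" "[\<gamma> * L 2 + int t * c * L 4 = f] (mod 3)"
    by (simp_all add: solve)
  then have "[x = (c + M * \<gamma>) * lucas (Suc (j + t * (8 * 3^k)))] (mod 3^Suc (Suc k))"
    and "[y = (c + M * \<gamma>) * lucas (Suc (Suc (j + t * (8 * 3^k))))] (mod 3^Suc (Suc k))"
    using lucas_lift_mod_3_pow[of x c j 1 k e \<gamma> t] lucas_lift_mod_3_pow[of y c j 2 k f \<gamma> t] e f
    by (simp_all add: L_def M_def eval_nat_numeral)
  moreover have "coprime (c + M * \<gamma>) (3^Suc (Suc k))"
  proof -
    have "\<not> 3 dvd c + M * \<gamma>" using c \<open>3 dvd M\<close> by (simp add: dvd_add_left_iff)
    then have "coprime (c + M * \<gamma>) 3"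
      using prime_imp_coprime[of 3 "c + M * \<gamma>"] by (simp add: coprime_commute)
    then show ?thesis by (simp only: coprime_power_right_iff simp_thms)
  qed
  ultimately show "\<exists>c' j'. coprime c' (3^Suc (Suc k)) \<and> [x = c' * lucas (Suc j')] (mod 3^Suc (Suc k))
      \<and> [y = c' * lucas (Suc (Suc j'))] (mod 3^Suc (Suc k))"
    by blast
qed

lemma lucas_pairs_cover_3_pow: "lucas_pairs_cover (3^Suc k)"
proof (induction k)
  case 0
  show ?case by (rule lucas_pairs_cover_if_check[of _ 8]) code_simp
next
  case (Suc k)
  then show ?case by (rule lucas_pairs_cover_3_pow_Suc)
qed

section \<open>The moduli modulo which the Lucas numbers are complete\<close>

lemma not_complete_mod_lucas_5: "\<not> complete_mod lucas 5"
  by (rule not_complete_mod_lucas_if_misses_check[of 5 4 0]) code_simp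

lemma not_complete_mod_lucas_8: "\<not> complete_mod lucas 8"
  by (rule not_complete_mod_lucas_if_misses_check[of 8 12 0]) code_simp

lemma not_complete_mod_lucas_12: "\<not> complete_mod lucas 12"
  by (rule not_complete_mod_lucas_if_misses_check[of 12 24 0]) code_simp

lemma not_complete_mod_lucas_18: "\<not> complete_mod lucas 18"
  by (rule not_complete_mod_lucas_if_misses_check[of 18 24 5]) code_simp

lemma not_complete_mod_lucas_21: "\<not> complete_mod lucas 21"
  by (rule not_complete_mod_lucas_if_misses_check[of 21 16 0]) code_simp

lemma not_complete_mod_lucas_28: "\<not> complete_mod lucas 28"
  by (rule not_complete_mod_lucas_if_misses_check[of 28 48 0]) code_simp

lemma not_complete_mod_lucas_49: "\<not> complete_mod lucas 49"
  by (rule not_complete_mod_lucas_if_misses_check[of 49 112 5]) code_simp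

lemma prime_less_11_cases:
  fixes p :: int
  assumes "prime p" "p < 11"
  shows "p \<in> {2, 3, 5, 7}"
proof -
  have "p = 2 \<or> p = 3 \<or> p = 4 \<or> p = 5 \<or> p = 6 \<or> p = 7 \<or> p = 8 \<or> p = 9 \<or> p = 10"
    using prime_gt_1_int[OF assms(1)] assms(2) by linarith
  then show ?thesis using assms(1) by auto
qed

lemma prime_factors_subset_if_complete_mod_lucas:
  fixes m :: int
  assumes "complete_mod lucas m"
  shows "prime_factors m \<subseteq> {2, 3, 7}"
proof
  fix p assume "p \<in> prime_factors m"
  then have p: "prime p" "p dvd m" by (simp_all add: in_prime_factors_iff)
  then have "complete_mod lucas p" using assms complete_mod_dvd by blast
  then have "p < 11" "p \<noteq> 5"
    using not_complete_mod_lucas_prime[OF p(1)] not_complete_mod_lucas_5 by force+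
  then show "p \<in> {2, 3, 7}" using prime_less_11_cases[OF p(1)] by auto
qed

lemma prime_factors_2_3_7_cases:
  fixes m :: int
  assumes "m \<ge> 2" "prime_factors m \<subseteq> {2, 3, 7}"
    and "\<not> 8 dvd m" "\<not> 12 dvd m" "\<not> 18 dvd m" "\<not> 21 dvd m" "\<not> 28 dvd m" "\<not> 49 dvd m"
  shows "m \<in> {2, 4, 6, 7, 14} \<or> (\<exists>k. m = 3^Suc k)"
proof -
  define a b c where "a = multiplicity 2 m" and "b = multiplicity 3 m" and "c = multiplicity 7 m"
  have "m = (\<Prod>p\<in>prime_factors m. p ^ multiplicity p m)"
    using assms(1) by (simp add: prod_prime_factors)
  also have "\<dots> = (\<Prod>p\<in>{2, 3, 7}. p ^ multiplicity p m)"
    using assms(2) by (intro prod.mono_neutral_left) (auto simp: prime_factors_multiplicity)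
  finally have m: "m = 2^a * 3^b * 7^c" by (simp add: a_def b_def c_def)
  have dvd: "2^i * 3^j * 7^l dvd m" if "i \<le> a" "j \<le> b" "l \<le> c" for i j l
    unfolding m using that by (intro mult_dvd_mono le_imp_power_dvd)
  have "a \<le> 2" using dvd[of 3 0 0] assms(3) by fastforce
  moreover have "c \<le> 1" using dvd[of 0 0 2] assms(8) by fastforce
  moreover have "\<not> (a = 2 \<and> 1 \<le> b)" using dvd[of 2 1 0] assms(4) by fastforce
  moreover have "\<not> (1 \<le> a \<and> 2 \<le> b)" using dvd[of 1 2 0] assms(5) by fastforce
  moreover have "\<not> (1 \<le> b \<and> c = 1)" using dvd[of 0 1 1] assms(6) by fastforce
  moreover have "\<not> (a = 2 \<and> c = 1)" using dvd[of 2 0 1] assms(7) by fastforce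
  moreover have "m \<noteq> 1" using assms(1) by simp
  ultimately show ?thesis
    unfolding m by (cases a; cases b; cases c) (auto simp: le_Suc_eq)
qed

lemma complete_mod_lucas_cases:
  fixes m :: int
  assumes "m \<ge> 2" "complete_mod lucas m"
  shows "m \<in> {2, 4, 6, 7, 14} \<or> (\<exists>k. m = 3^Suc k)"
proof (rule prime_factors_2_3_7_cases[OF assms(1) prime_factors_subset_if_complete_mod_lucas[OF assms(2)]])
  show "\<not> 8 dvd m" "\<not> 12 dvd m" "\<not> 18 dvd m" "\<not> 21 dvd m" "\<not> 28 dvd m" "\<not> 49 dvd m"
    using assms(2) complete_mod_dvd not_complete_mod_lucas_8 not_complete_mod_lucas_12
      not_complete_mod_lucas_18 not_complete_mod_lucas_21 not_complete_mod_lucas_28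
      not_complete_mod_lucas_49 by blast+
qed

lemma lucas_pairs_cover_if_complete_mod_lucas:
  assumes "m \<ge> 2" "complete_mod lucas m"
  shows "lucas_pairs_cover m"
proof -
  have "lucas_pairs_cover 2" by (rule lucas_pairs_cover_if_check[of _ 3]) code_simp
  moreover have "lucas_pairs_cover 4" by (rule lucas_pairs_cover_if_check[of _ 6]) code_simp
  moreover have "lucas_pairs_cover 6" by (rule lucas_pairs_cover_if_check[of _ 24]) code_simp
  moreover have "lucas_pairs_cover 7" by (rule lucas_pairs_cover_if_check[of _ 16]) code_simp
  moreover have "lucas_pairs_cover 14" by (rule lucas_pairs_cover_if_check[of _ 24]) code_simp
  ultimately show ?thesis
    using complete_mod_lucas_cases[OF assms] lucas_pairs_cover_3_pow by blast
qed

theorem mainTheorem10: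
  fixes m :: int
  assumes "m \<ge> 2"
    and "complete_mod lucas m"
  shows "\<forall>a b :: int. gcd a b = 1 \<longrightarrow> complete_mod (gib a b) m"
proof (intro allI impI)
  fix a b :: int
  assume "gcd a b = 1"
  then have "coprime a b" by (simp add: coprime_iff_gcd_eq_1)
  moreover have "m > 0" using assms(1) by simp
  ultimately show "complete_mod (gib a b) m"
    using complete_mod_gib_if_lucas_pairs_cover lucas_pairs_cover_if_complete_mod_lucas[OF assms] assms(2)
    by blast
qed

end
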